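(* Let $N<d_x$, with $(x_i,y_i)$ and $\epsilon_i$ sampled independently and $x_i,\epsilon_i$ continuous random vectors. Assume the best Frobenius-norm approximation of $Y$ among matrices of rank at most $p$ is unique. Let $(W_2(t),W_1(t))$ be the gradient flow of $\mathcal L_{base}$ with balanced initialization $W_2(0)^TW_2(0)=W_1(0)W_1(0)^T$, with $\|W_1(0)\|_F\le\delta$ and $\|W_2(0)\|_F\le \delta$ for some $\delta>0$, and assume it converges to a global minimizer of $\mathcal L_{base}$. Then almost surely $$\lim_{t\to\infty}W_2(t)W_1(t)=U_pU_p^TY(X_\epsilon^TX_\epsilon)^{-1}X_\epsilon^T+W(\delta),\qquad \|W(\delta)\|_F\le\big(\sqrt p\,\delta+p^{1/4}\gamma^{1/2}\big)\delta,$$ where $\gamma=\|U_pU_p^TY(X_\epsilon^TX_\epsilon)^{-1}X_\epsilon^T\|_F$.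
   Context: Integers $N,d_x,d_1,d_y\ge1$. Clean inputs $x_1,\dots,x_N\in\mathbb R^{d_x}$, targets $y_1,\dots,y_N\in\mathbb R^{d_y}$, noise vectors $\epsilon_1,\dots,\epsilon_N\in\mathbb R^{d_x}$. $X\in\mathbb R^{d_x\times N}$ has columns $x_i$, $X_\epsilon\in\mathbb R^{d_x\times N}$ has columns $x_i+\epsilon_i$, $Y\in\mathbb R^{d_y\times N}$ has columns $y_i$. A two-layer linear network is a pair $(W_2,W_1)$ with $W_1\in\mathbb R^{d_1\times d_x}$, $W_2\in\mathbb R^{d_y\times d_1}$; $p:=\min(d_x,d_1,d_y)$. Base loss: $\mathcal L_{base}(W_2,W_1)=\|W_2W_1X_\epsilon-Y\|_F^2$. $U_p\in\mathbb R^{d_y\times p}$ is a matrix whose orthonormal columns are eigenvectors of $YY^T$ for its $p$ largest eigenvalues (completed by arbitrary orthonormal vectors if $\mathrm{rank}(Y)<p$). Uniqueness of the best rank-$\le p$ approximation (equivalently $\mathrm{rank}(Y)\le p$ or the $p$-th largest eigenvalue of $YY^T$ exceeds the $(p+1)$-th) makes $U_pU_p^TY$ independent of the choice of $U_p$. Gradient flow of a loss $\mathcal L$: the solution of $\frac{d}{dt}W_i=-\nabla_{W_i}\mathcal L(W_2,W_1)$. *)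

theory Defs
  imports "HOL-Analysis.Analysis" "HOL-Probability.Probability"
begin

text \<open>Matrices are HOL-Analysis matrices: A :: real^'c^'r has rows indexed by 'r and
  columns indexed by 'c, entry A $ r $ c.\<close>

definition frob :: "real^'c^'r \<Rightarrow> real" where
  "frob A = sqrt (\<Sum>r\<in>UNIV. \<Sum>c\<in>UNIV. (A $ r $ c)^2)"

text \<open>On pairs of matrices the inner product is the sum of the
  Frobenius inner products, so its components are the partial gradients.\<close>
definition grad :: "('a::real_inner \<Rightarrow> real) \<Rightarrow> 'a \<Rightarrow> 'a" where
  "grad f x = (SOME g. (f has_derivative (\<lambda>h. inner g h)) (at x))"

text \<open>Data matrices: column i is a sample.\<close>
definition colmat :: "('N \<Rightarrow> real^'d) \<Rightarrow> real^'N^'d" where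
  "colmat v = (\<chi> r c. v c $ r)"

definition Lbase :: "real^'N^'dx \<Rightarrow> real^'N^'dy \<Rightarrow> ((real^'d1^'dy) \<times> (real^'dx^'d1)) \<Rightarrow> real" where
  "Lbase Xe Y W = (frob (fst W ** snd W ** Xe - Y))^2"

definition is_gradient_flow :: "(('a::real_inner) \<Rightarrow> real) \<Rightarrow> (real \<Rightarrow> 'a) \<Rightarrow> bool" where
  "is_gradient_flow L W \<longleftrightarrow>
     (\<forall>t\<ge>0. (W has_vector_derivative (- grad L (W t))) (at t within {0..}))"

definition pdim :: "'dx::finite itself \<Rightarrow> 'd1::finite itself \<Rightarrow> 'dy::finite itself \<Rightarrow> nat" where
  "pdim _ _ _ = min CARD('dx) (min CARD('d1) CARD('dy))"

text \<open>Eigenvectors for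
  eigenvalue 0 are arbitrary orthonormal vectors of the kernel, which covers the
  completion by arbitrary orthonormal vectors when rank(Y) < p.\<close>
definition top_eigvecs :: "real^'n^'n \<Rightarrow> nat \<Rightarrow> (nat \<Rightarrow> real^'n) \<Rightarrow> bool" where
  "top_eigvecs A p u \<longleftrightarrow>
     (\<exists>v \<mu>. (\<forall>i<CARD('n). \<forall>j<CARD('n). inner (v i) (v j) = (if i = j then 1 else 0))
        \<and> (\<forall>i<CARD('n). A *v v i = \<mu> i *\<^sub>R v i)
        \<and> (\<forall>i j. i \<le> j \<longrightarrow> j < CARD('n) \<longrightarrow> \<mu> j \<le> \<mu> i)
        \<and> (\<forall>i<p. u i = v i))"

definition projU :: "nat \<Rightarrow> (nat \<Rightarrow> real^'n) \<Rightarrow> real^'n^'n" where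
  "projU p u = (\<chi> r c. \<Sum>i<p. u i $ r * u i $ c)"

definition unique_best_rank_approx :: "nat \<Rightarrow> real^'c^'r \<Rightarrow> bool" where
  "unique_best_rank_approx p Y \<longleftrightarrow>
     (\<exists>!B. rank B \<le> p \<and> (\<forall>C. rank C \<le> p \<longrightarrow> frob (Y - B) \<le> frob (Y - C)))"

end

theory Submission
  imports Defs
begin

text \<open>
  Almost surely the noisy inputs are linearly independent: each column \<open>x\<^sub>k + \<epsilon>\<^sub>k\<close> is
  absolutely continuous and independent of the other columns, whose span is a Lebesgue null set
  because \<open>N < d\<^sub>x\<close>. Hence \<open>G = X\<^sub>\<epsilon>\<^sup>T X\<^sub>\<epsilon>\<close> is invertible and
  \<open>P = X\<^sub>\<epsilon> G\<^sup>-\<^sup>1 X\<^sub>\<epsilon>\<^sup>T\<close> is the orthogonal projection onto the column space of \<open>X\<^sub>\<epsilon>\<close>.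

  Along the gradient flow both \<open>W\<^sub>1 (I - P)\<close> and the imbalance
  \<open>W\<^sub>2\<^sup>T W\<^sub>2 - W\<^sub>1 W\<^sub>1\<^sup>T\<close> are conserved, so the limit \<open>(A\<^sub>2, A\<^sub>1)\<close> is balanced and
  \<open>A\<^sub>1 (I - P) = W\<^sub>1(0) (I - P)\<close>. A global minimiser realises a best rank-\<open>p\<close> approximation
  of \<open>Y\<close>, which by uniqueness and the Eckart-Young theorem is \<open>U\<^sub>p U\<^sub>p\<^sup>T Y\<close>; thus
  \<open>A\<^sub>2 A\<^sub>1 = W\<^sup>* + A\<^sub>2 W\<^sub>1(0) (I - P)\<close>. Finally, for a balanced pair
  \<open>\<parallel>A\<^sub>2\<parallel>\<^sup>2 = tr (A\<^sub>2\<^sup>T A\<^sub>2) \<le> \<surd>p \<parallel>A\<^sub>2 A\<^sub>1\<parallel> \<le> \<surd>p (\<gamma> + \<delta> \<parallel>A\<^sub>2\<parallel>)\<close>,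
  and solving this quadratic inequality for \<open>\<parallel>A\<^sub>2\<parallel>\<close> bounds the perturbation.
\<close>

section \<open>Frobenius inner product and norm of matrices\<close>

lemma frob_eq_norm: "frob (A::real^'c::finite^'r::finite) = norm A"
  unfolding frob_def norm_vec_def L2_set_def by (simp add: sum_nonneg)

lemma inner_matrix: "inner (A::real^'c::finite^'r::finite) B = (\<Sum>r\<in>UNIV. \<Sum>c\<in>UNIV. A$r$c * B$r$c)"
  by (simp add: inner_vec_def)

lemma power2_norm_matrix: "(norm (A::real^'c::finite^'r::finite))\<^sup>2 = (\<Sum>r\<in>UNIV. \<Sum>c\<in>UNIV. (A$r$c)\<^sup>2)"
  unfolding power2_norm_eq_inner inner_matrix by (simp add: power2_eq_square)

lemma power2_norm_columns: "(norm (A::real^'c::finite^'r::finite))\<^sup>2 = (\<Sum>c\<in>UNIV. (norm (column c A))\<^sup>2)"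
  unfolding power2_norm_matrix power2_norm_eq_inner
  by (simp add: inner_vec_def column_def power2_eq_square sum.swap[of _ "UNIV::'r set"])

lemma inner_transpose: "inner (transpose (A::real^'c::finite^'r::finite)) (transpose B) = inner A B"
  unfolding inner_matrix transpose_def by (simp add: sum.swap[of _ "UNIV::'c set"])

lemma norm_transpose: "norm (transpose (A::real^'c::finite^'r::finite)) = norm A"
  by (simp add: norm_eq_sqrt_inner inner_transpose)

lemma inner_matrix_mult_right:
  fixes A :: "real^'c::finite^'r::finite" and B :: "real^'k::finite^'r" and C :: "real^'c^'k"
  shows "inner A (B ** C) = inner (A ** transpose C) B"
  unfolding inner_matrix matrix_matrix_mult_def transpose_def
  by (simp add: sum_distrib_left sum_distrib_right mult_ac sum.swap[of _ "UNIV::'c set"])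

lemma inner_matrix_mult_left:
  fixes A :: "real^'c::finite^'r::finite" and B :: "real^'k::finite^'r" and C :: "real^'c^'k"
  shows "inner A (B ** C) = inner (transpose B ** A) C"
proof -
  have "inner A (B ** C) = inner (transpose A) (transpose C ** transpose B)"
    by (simp add: inner_transpose flip: matrix_transpose_mul)
  also have "\<dots> = inner (transpose (transpose B ** A)) (transpose C)"
    by (simp add: inner_matrix_mult_right matrix_transpose_mul)
  finally show ?thesis
    by (simp add: inner_transpose)
qed

lemma matrix_add_rdistrib: "((A::'a::semiring_1^'k^'r) + B) ** C = A ** C + B ** C"
  by (simp add: matrix_matrix_mult_def vec_eq_iff sum.distrib distrib_right)

lemma matrix_diff_ldistrib: "(A::'a::ring_1^'k^'r) ** (B - C) = A ** B - A ** C"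
  by (simp add: matrix_matrix_mult_def vec_eq_iff sum_subtractf right_diff_distrib)

lemma transpose_add: "transpose ((A::'a::semiring_1^'k^'r) + B) = transpose A + transpose B"
  by (simp add: transpose_def vec_eq_iff)

lemma transpose_diff: "transpose ((A::'a::ring_1^'k^'r) - B) = transpose A - transpose B"
  by (simp add: transpose_def vec_eq_iff)

lemma column_diff: "column c ((A::real^'c::finite^'r::finite) - B) = column c A - column c B"
  by (simp add: column_def vec_eq_iff)

lemma matrix_vector_mult_sum: "(A::real^'c::finite^'r::finite) *v (\<Sum>i\<in>I. f i) = (\<Sum>i\<in>I. A *v f i)"
  by (induction I rule: infinite_finite_induct) (simp_all add: matrix_vector_right_distrib)

lemma matrix_inv_right: "invertible A \<Longrightarrow> A ** matrix_inv A = mat 1"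
  and matrix_inv_left: "invertible A \<Longrightarrow> matrix_inv A ** A = mat 1"
  unfolding invertible_def matrix_inv_def by (metis (mono_tags, lifting) someI_ex)+

lemma norm_matrix_mult_le:
  fixes A :: "real^'k::finite^'r::finite" and B :: "real^'c::finite^'k"
  shows "norm (A ** B) \<le> norm A * norm B"
proof -
  have "(norm (A ** B))\<^sup>2 = (\<Sum>r\<in>UNIV. \<Sum>c\<in>UNIV. (inner (A$r) (column c B))\<^sup>2)"
    unfolding power2_norm_matrix matrix_matrix_mult_def column_def inner_vec_def by simp
  also have "\<dots> \<le> (\<Sum>r\<in>UNIV. \<Sum>c\<in>UNIV. (norm (A$r))\<^sup>2 * (norm (column c B))\<^sup>2)"
  proof (intro sum_mono)
    fix r c
    have "\<bar>inner (A$r) (column c B)\<bar> \<le> norm (A$r) * norm (column c B)"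
      by (rule Cauchy_Schwarz_ineq2)
    then have "(inner (A$r) (column c B))\<^sup>2 \<le> (norm (A$r) * norm (column c B))\<^sup>2"
      by (metis abs_ge_zero power2_abs power_mono)
    then show "(inner (A$r) (column c B))\<^sup>2 \<le> (norm (A$r))\<^sup>2 * (norm (column c B))\<^sup>2"
      by (simp add: power_mult_distrib)
  qed
  also have "\<dots> = (\<Sum>r\<in>UNIV. (norm (A$r))\<^sup>2) * (\<Sum>c\<in>UNIV. (norm (column c B))\<^sup>2)"
    by (simp add: sum_product)
  also have "(\<Sum>r\<in>UNIV. (norm (A$r))\<^sup>2) = (norm A)\<^sup>2"
    by (simp add: norm_vec_def L2_set_def sum_nonneg)
  also have "(\<Sum>c\<in>UNIV. (norm (column c B))\<^sup>2) = (norm B)\<^sup>2"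
    by (rule power2_norm_columns[symmetric])
  finally have "(norm (A ** B))\<^sup>2 \<le> (norm A * norm B)\<^sup>2"
    by (simp add: power_mult_distrib)
  then show ?thesis
    by (rule power2_le_imp_le) simp
qed

lemma bounded_bilinear_matrix_mult:
  "bounded_bilinear ((**) :: real^'k::finite^'r::finite \<Rightarrow> real^'c::finite^'k \<Rightarrow> real^'c^'r)"
  unfolding bilinear_conv_bounded_bilinear[symmetric] bilinear_def
  by (simp add: linear_iff matrix_add_rdistrib matrix_add_ldistrib scalar_matrix_assoc matrix_scalar_ac)

lemma bounded_bilinear_matrix_vector_mult:
  "bounded_bilinear ((*v) :: real^'n::finite^'m::finite \<Rightarrow> real^'n \<Rightarrow> real^'m)"
  unfolding bilinear_conv_bounded_bilinear[symmetric] bilinear_def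
  by (simp add: linear_iff matrix_vector_mult_add_rdistrib matrix_vector_right_distrib
      matrix_vector_mult_scaleR scaleR_matrix_vector_assoc)

lemma bounded_linear_transpose: "bounded_linear (transpose :: real^'c::finite^'r::finite \<Rightarrow> real^'r^'c)"
  by (rule bounded_linear_intro[where K=1]) (simp_all add: transpose_add transpose_scalar norm_transpose)

section \<open>Conservation laws of the gradient flow\<close>

lemma grad_eqI:
  assumes "(f has_derivative (\<lambda>h. inner g h)) (at x)"
  shows "grad f x = g"
proof -
  have "(f has_derivative (\<lambda>h. inner (grad f x) h)) (at x)"
    unfolding grad_def by (rule someI) (rule assms)
  then have "(\<lambda>h. inner (grad f x) h) = (\<lambda>h. inner g h)"
    using assms by (rule has_derivative_unique)
  then have "inner (grad f x - g) (grad f x - g) = 0"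
    unfolding inner_diff_left by (metis diff_self)
  then show ?thesis
    by simp
qed

lemma conserved_limit:
  fixes f :: "real \<Rightarrow> 'a::real_normed_vector"
  assumes deriv: "\<And>t. t \<ge> 0 \<Longrightarrow> (f has_derivative (\<lambda>_. 0)) (at t within {0..})"
    and lim: "(f \<longlongrightarrow> l) at_top"
  shows "l = f 0"
proof -
  obtain c where c: "\<forall>t\<in>{0..}. f t = c"
    using has_derivative_zero_constant[of "{0::real..}" f] deriv by auto
  have "eventually (\<lambda>t. f t = f 0) at_top"
    using eventually_ge_at_top[of "0::real"] by (rule eventually_mono) (use c in auto)
  then have "(f \<longlongrightarrow> f 0) at_top"
    by (rule tendsto_eventually)
  with lim show ?thesis
    using tendsto_unique trivial_limit_at_top_linorder by blast
qed

text \<open>The factor shared by both partial gradients of \<^const>\<open>Lbase\<close>: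
  \<open>\<nabla>\<^sub>W\<^sub>2 = 2 R W\<^sub>1\<^sup>T\<close> and \<open>\<nabla>\<^sub>W\<^sub>1 = 2 W\<^sub>2\<^sup>T R\<close> for \<open>R = (W\<^sub>2 W\<^sub>1 X\<^sub>\<epsilon> - Y) X\<^sub>\<epsilon>\<^sup>T\<close>.\<close>
definition residual_correlation ::
  "real^'N::finite^'dx::finite \<Rightarrow> real^'N^'dy::finite \<Rightarrow> (real^'d1::finite^'dy) \<times> (real^'dx^'d1) \<Rightarrow> real^'dx^'dy"
  where "residual_correlation Xe Y W = (fst W ** snd W ** Xe - Y) ** transpose Xe"

lemma Lbase_has_derivative:
  fixes Xe :: "real^'N::finite^'dx::finite" and Y :: "real^'N^'dy::finite"
    and W :: "(real^'d1::finite^'dy) \<times> (real^'dx^'d1)"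
  defines "R \<equiv> residual_correlation Xe Y W"
  shows "(Lbase Xe Y has_derivative
           (\<lambda>H. inner (2 *\<^sub>R (R ** transpose (snd W)), 2 *\<^sub>R (transpose (fst W) ** R)) H)) (at W)"
proof -
  define E where "E V = fst V ** snd V ** Xe - Y" for V :: "(real^'d1^'dy) \<times> (real^'dx^'d1)"
  have "((\<lambda>V. fst V ** snd V) has_derivative (\<lambda>H. fst W ** snd H + fst H ** snd W)) (at W)"
    by (rule bounded_bilinear.FDERIV[OF bounded_bilinear_matrix_mult
          has_derivative_fst[OF has_derivative_ident] has_derivative_snd[OF has_derivative_ident]])
  then have "((\<lambda>V. fst V ** snd V ** Xe) has_derivative (\<lambda>H. (fst W ** snd H + fst H ** snd W) ** Xe)) (at W)"
    by (rule bounded_linear.has_derivative[OF bounded_bilinear.bounded_linear_left[OF bounded_bilinear_matrix_mult]])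
  then have dE: "(E has_derivative (\<lambda>H. fst H ** snd W ** Xe + fst W ** snd H ** Xe)) (at W)"
    unfolding E_def by (auto intro!: derivative_eq_intros simp: matrix_add_rdistrib)
  have "((\<lambda>V. inner (E V) (E V)) has_derivative
      (\<lambda>H. 2 * inner (E W) (fst H ** snd W ** Xe + fst W ** snd H ** Xe))) (at W)"
    using has_derivative_inner[OF dE dE] by (simp add: inner_commute)
  moreover have "Lbase Xe Y = (\<lambda>V. inner (E V) (E V))"
    by (simp add: fun_eq_iff Lbase_def E_def frob_eq_norm power2_norm_eq_inner)
  moreover have "2 * inner (E W) (fst H ** snd W ** Xe + fst W ** snd H ** Xe)
      = inner (2 *\<^sub>R (R ** transpose (snd W)), 2 *\<^sub>R (transpose (fst W) ** R)) H" for H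
  proof -
    have "inner (E W) (fst H ** snd W ** Xe) = inner (E W ** transpose (snd W ** Xe)) (fst H)"
      by (simp add: inner_matrix_mult_right flip: matrix_mul_assoc)
    also have "\<dots> = inner (R ** transpose (snd W)) (fst H)"
      by (simp add: R_def residual_correlation_def E_def matrix_transpose_mul matrix_mul_assoc)
    finally have first: "inner (E W) (fst H ** snd W ** Xe) = inner (R ** transpose (snd W)) (fst H)" .
    have "inner (E W) (fst W ** snd H ** Xe) = inner (E W ** transpose Xe) (fst W ** snd H)"
      by (rule inner_matrix_mult_right)
    also have "\<dots> = inner (transpose (fst W) ** R) (snd H)"
      by (simp add: inner_matrix_mult_left R_def residual_correlation_def E_def)
    finally show ?thesis
      using first
      by (simp add: inner_prod_def algebra_simps)
  qed
  ultimately show ?thesis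
    by simp
qed

lemma Lbase_gradient_flow_derivatives:
  fixes Xe :: "real^'N::finite^'dx::finite" and Y :: "real^'N^'dy::finite"
    and W2 :: "real \<Rightarrow> real^'d1::finite^'dy" and W1 :: "real \<Rightarrow> real^'dx^'d1"
  assumes "is_gradient_flow (Lbase Xe Y) (\<lambda>t. (W2 t, W1 t))" and "t \<ge> 0"
  defines "R \<equiv> residual_correlation Xe Y (W2 t, W1 t)"
  shows "(W2 has_derivative (\<lambda>h. h *\<^sub>R ((- 2) *\<^sub>R (R ** transpose (W1 t))))) (at t within {0..})"
    and "(W1 has_derivative (\<lambda>h. h *\<^sub>R ((- 2) *\<^sub>R (transpose (W2 t) ** R)))) (at t within {0..})"
proof -
  have "grad (Lbase Xe Y) (W2 t, W1 t) = (2 *\<^sub>R (R ** transpose (W1 t)), 2 *\<^sub>R (transpose (W2 t) ** R))"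
    unfolding R_def using Lbase_has_derivative[of Xe Y "(W2 t, W1 t)"] by (intro grad_eqI) simp
  then have grad: "- grad (Lbase Xe Y) (W2 t, W1 t) =
      ((- 2) *\<^sub>R (R ** transpose (W1 t)), (- 2) *\<^sub>R (transpose (W2 t) ** R))"
    by simp
  have "((\<lambda>t. (W2 t, W1 t)) has_derivative (\<lambda>h. h *\<^sub>R (- grad (Lbase Xe Y) (W2 t, W1 t))))
      (at t within {0..})"
    using assms(1,2) unfolding is_gradient_flow_def has_vector_derivative_def by blast
  then have "((\<lambda>t. (W2 t, W1 t)) has_derivative
      (\<lambda>h. h *\<^sub>R ((- 2) *\<^sub>R (R ** transpose (W1 t)), (- 2) *\<^sub>R (transpose (W2 t) ** R)))) (at t within {0..})"
    by (simp only: grad)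
  from has_derivative_fst[OF this] has_derivative_snd[OF this]
  show "(W2 has_derivative (\<lambda>h. h *\<^sub>R ((- 2) *\<^sub>R (R ** transpose (W1 t))))) (at t within {0..})"
    and "(W1 has_derivative (\<lambda>h. h *\<^sub>R ((- 2) *\<^sub>R (transpose (W2 t) ** R)))) (at t within {0..})"
    by simp_all
qed

lemma Lbase_flow_kernel_derivative:
  fixes Xe :: "real^'N::finite^'dx::finite" and Y :: "real^'N^'dy::finite"
    and W2 :: "real \<Rightarrow> real^'d1::finite^'dy" and W1 :: "real \<Rightarrow> real^'dx^'d1"
  assumes flow: "is_gradient_flow (Lbase Xe Y) (\<lambda>t. (W2 t, W1 t))" and t: "t \<ge> 0"
    and P: "transpose Xe ** P = 0"
  shows "((\<lambda>t. W1 t ** P) has_derivative (\<lambda>_. 0)) (at t within {0..})"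
proof -
  let ?R = "residual_correlation Xe Y (W2 t, W1 t)"
  have "?R ** P = 0"
    using P by (simp add: residual_correlation_def flip: matrix_mul_assoc)
  then have vanish: "(h *\<^sub>R ((- 2) *\<^sub>R (transpose (W2 t) ** ?R))) ** P = 0" for h
    by (simp only: flip: scalar_matrix_assoc matrix_mul_assoc) simp
  have "((\<lambda>t. W1 t ** P) has_derivative (\<lambda>h. (h *\<^sub>R ((- 2) *\<^sub>R (transpose (W2 t) ** ?R))) ** P))
      (at t within {0..})"
    by (rule bounded_linear.has_derivative[OF
          bounded_bilinear.bounded_linear_left[OF bounded_bilinear_matrix_mult]
          Lbase_gradient_flow_derivatives(2)[OF flow t]])
  then show ?thesis
    by (simp only: vanish)
qed

lemma Lbase_flow_imbalance_derivative:
  fixes Xe :: "real^'N::finite^'dx::finite" and Y :: "real^'N^'dy::finite"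
    and W2 :: "real \<Rightarrow> real^'d1::finite^'dy" and W1 :: "real \<Rightarrow> real^'dx^'d1"
  assumes flow: "is_gradient_flow (Lbase Xe Y) (\<lambda>t. (W2 t, W1 t))" and t: "t \<ge> 0"
  shows "((\<lambda>t. transpose (W2 t) ** W2 t - W1 t ** transpose (W1 t)) has_derivative (\<lambda>_. 0))
           (at t within {0..})"
proof -
  let ?R = "residual_correlation Xe Y (W2 t, W1 t)"
  \<comment> \<open>An opaque constant keeps the simplifier from splitting \<open>- 2\<close> into signs.\<close>
  define c :: real where "c = - 2"
  define M2 where "M2 = ?R ** transpose (W1 t)"
  define M1 where "M1 = transpose (W2 t) ** ?R"
  note d2 = Lbase_gradient_flow_derivatives(1)[OF flow t, folded c_def M2_def]
  note d1 = Lbase_gradient_flow_derivatives(2)[OF flow t, folded c_def M1_def]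
  note mult = bounded_bilinear.FDERIV[OF bounded_bilinear_matrix_mult]
  note trans = bounded_linear.has_derivative[OF bounded_linear_transpose]
  have "((\<lambda>t. transpose (W2 t) ** W2 t - W1 t ** transpose (W1 t)) has_derivative
      (\<lambda>h. (transpose (W2 t) ** (h *\<^sub>R c *\<^sub>R M2) + transpose (h *\<^sub>R c *\<^sub>R M2) ** W2 t) -
           (W1 t ** transpose (h *\<^sub>R c *\<^sub>R M1) + (h *\<^sub>R c *\<^sub>R M1) ** transpose (W1 t))))
      (at t within {0..})"
    by (intro has_derivative_diff mult[OF trans[OF d2] d2] mult[OF d1 trans[OF d1]])
  moreover have "transpose (W2 t) ** M2 + transpose M2 ** W2 t = W1 t ** transpose M1 + M1 ** transpose (W1 t)"
    by (simp add: M1_def M2_def matrix_transpose_mul matrix_mul_assoc add.commute)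
  ultimately show ?thesis
    by (simp add: transpose_scalar matrix_scalar_ac
        flip: scalar_matrix_assoc scaleR_add_right scaleR_right_diff_distrib)
qed

section \<open>Orthonormal families\<close>

definition orthonormal_on :: "'i set \<Rightarrow> ('i \<Rightarrow> 'a::real_inner) \<Rightarrow> bool" where
  "orthonormal_on I w \<longleftrightarrow> (\<forall>i\<in>I. \<forall>j\<in>I. inner (w i) (w j) = (if i = j then 1 else 0))"

lemma orthonormal_on_inj: "orthonormal_on I w \<Longrightarrow> inj_on w I"
  unfolding orthonormal_on_def inj_on_def by (metis one_neq_zero)

lemma orthonormal_on_inner_sum:
  assumes "orthonormal_on I w" "finite I" "j \<in> I"
  shows "inner (\<Sum>i\<in>I. c i *\<^sub>R w i) (w j) = c j"
proof -
  have "inner (\<Sum>i\<in>I. c i *\<^sub>R w i) (w j) = (\<Sum>i\<in>I. if i = j then c i else 0)"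
    using assms(1,3) unfolding orthonormal_on_def by (auto simp: inner_sum_left intro: sum.cong)
  then show ?thesis
    using assms(2,3) by simp
qed

lemma orthonormal_on_norm_sum:
  assumes "orthonormal_on I w" "finite I"
  shows "(norm (\<Sum>i\<in>I. c i *\<^sub>R w i))\<^sup>2 = (\<Sum>i\<in>I. (c i)\<^sup>2)"
  unfolding power2_norm_eq_inner
  using orthonormal_on_inner_sum[OF assms] by (simp add: inner_sum_right power2_eq_square)

lemma orthonormal_on_dist_sum:
  assumes "orthonormal_on I w" "finite I"
  shows "(norm (x - (\<Sum>i\<in>I. c i *\<^sub>R w i)))\<^sup>2 =
         (norm x)\<^sup>2 - (\<Sum>i\<in>I. (inner x (w i))\<^sup>2) + (\<Sum>i\<in>I. (c i - inner x (w i))\<^sup>2)"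
proof -
  have "(norm (x - (\<Sum>i\<in>I. c i *\<^sub>R w i)))\<^sup>2 =
      (norm x)\<^sup>2 - 2 * (\<Sum>i\<in>I. c i * inner x (w i)) + (\<Sum>i\<in>I. (c i)\<^sup>2)"
    using orthonormal_on_norm_sum[OF assms]
    by (simp add: power2_norm_eq_inner inner_diff_left inner_diff_right inner_commute inner_sum_right)
  then show ?thesis
    by (simp add: power2_diff sum.distrib sum_subtractf sum_distrib_left algebra_simps)
qed

lemma bessel_inequality:
  assumes "orthonormal_on I w" "finite I"
  shows "(\<Sum>i\<in>I. (inner x (w i))\<^sup>2) \<le> (norm x)\<^sup>2"
  using orthonormal_on_dist_sum[OF assms, of x "\<lambda>i. inner x (w i)"]
    zero_le_power2[of "norm (x - (\<Sum>i\<in>I. inner x (w i) *\<^sub>R w i))"]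
  by simp

lemma orthonormal_on_best_approx:
  assumes "orthonormal_on I w" "finite I" "z \<in> span (w ` I)"
  shows "(norm x)\<^sup>2 - (\<Sum>i\<in>I. (inner x (w i))\<^sup>2) \<le> (norm (x - z))\<^sup>2"
proof -
  obtain d where "z = (\<Sum>v\<in>w ` I. d v *\<^sub>R v)"
    using assms(2,3) span_finite by blast
  also have "\<dots> = (\<Sum>i\<in>I. d (w i) *\<^sub>R w i)"
    by (rule sum.reindex[OF orthonormal_on_inj[OF assms(1)], unfolded comp_def])
  finally show ?thesis
    by (simp add: orthonormal_on_dist_sum[OF assms(1,2)] sum_nonneg)
qed

lemma parseval_identity:
  assumes "orthonormal_on I w" "finite I" "x \<in> span (w ` I)"
  shows "(\<Sum>i\<in>I. (inner x (w i))\<^sup>2) = (norm x)\<^sup>2"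
  using orthonormal_on_best_approx[OF assms, of x] bessel_inequality[OF assms(1,2), of x] by simp

lemma orthonormal_on_expansion:
  assumes "orthonormal_on I w" "finite I" "x \<in> span (w ` I)"
  shows "x = (\<Sum>i\<in>I. inner x (w i) *\<^sub>R w i)"
  using orthonormal_on_dist_sum[OF assms(1,2), of x "\<lambda>i. inner x (w i)"] parseval_identity[OF assms]
  by simp

lemma orthonormal_on_span_UNIV:
  fixes v :: "nat \<Rightarrow> real^'n::finite"
  assumes "orthonormal_on {..<CARD('n)} v"
  shows "span (v ` {..<CARD('n)}) = UNIV"
proof -
  let ?B = "v ` {..<CARD('n)}"
  have "pairwise orthogonal ?B" "0 \<notin> ?B"
    using assms unfolding orthonormal_on_def pairwise_def orthogonal_def
    by (auto, metis inner_zero_left lessThan_iff zero_neq_one)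
  then have "independent ?B"
    by (rule pairwise_orthogonal_independent)
  moreover have "card ?B = dim (UNIV :: (real^'n) set)"
    using card_image[OF orthonormal_on_inj[OF assms]] by simp
  ultimately show ?thesis
    using card_eq_dim[of ?B UNIV] by auto
qed

lemma orthonormal_column_basis:
  fixes C :: "real^'c::finite^'r::finite"
  obtains B where "finite B" "orthonormal_on B (\<lambda>b. b)" "card B = rank C"
    "\<And>c. column c C \<in> span B"
proof -
  obtain B where "B \<subseteq> span (columns C)" and B: "pairwise orthogonal B" "\<And>x. x \<in> B \<Longrightarrow> norm x = 1"
    "independent B" "card B = dim (span (columns C))" "span B = span (columns C)"
    using orthonormal_basis_subspace[OF subspace_span[of "columns C"]] by blast
  show ?thesis
  proof
    show "finite B"
      using B(3) by (rule independent_imp_finite)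
    show "orthonormal_on B (\<lambda>b. b)"
      using B(1,2) unfolding orthonormal_on_def pairwise_def orthogonal_def
      by (metis norm_eq_1)
    show "card B = rank C"
      using B(4) by (simp add: column_rank_def)
    show "column c C \<in> span B" for c
      unfolding B(5) by (rule span_base) (auto simp: columns_def)
  qed
qed

section \<open>The Eckart-Young theorem\<close>

lemma sum_inner_columns_square:
  "(\<Sum>c\<in>UNIV. (inner (column c (Y::real^'c::finite^'r::finite)) w)\<^sup>2) = inner w ((Y ** transpose Y) *v w)"
proof -
  have "(\<Sum>c\<in>UNIV. (inner (column c Y) w)\<^sup>2) =
      (\<Sum>c\<in>UNIV. \<Sum>k\<in>UNIV. \<Sum>l\<in>UNIV. w$k * (Y$k$c * Y$l$c * w$l))"
    by (simp add: inner_vec_def column_def power2_eq_square sum_product mult_ac)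
  also have "\<dots> = (\<Sum>k\<in>UNIV. \<Sum>l\<in>UNIV. \<Sum>c\<in>UNIV. w$k * (Y$k$c * Y$l$c * w$l))"
    by (subst sum.swap) (simp add: sum.swap[of _ "UNIV::'c set"])
  also have "\<dots> = inner w ((Y ** transpose Y) *v w)"
    by (simp add: inner_vec_def matrix_vector_mult_def matrix_matrix_mult_def transpose_def
        sum_distrib_left sum_distrib_right mult_ac)
  finally show ?thesis .
qed

lemma sum_weighted_le_sum_top:
  fixes \<mu> c :: "nat \<Rightarrow> real"
  assumes pn: "p \<le> n" and c0: "\<And>j. j < n \<Longrightarrow> 0 \<le> c j" and c1: "\<And>j. j < n \<Longrightarrow> c j \<le> 1"
    and c_sum: "(\<Sum>j<n. c j) \<le> real p"
    and \<mu>_mono: "\<And>i j. i \<le> j \<Longrightarrow> j < n \<Longrightarrow> \<mu> j \<le> \<mu> i" and \<mu>0: "\<And>j. j < n \<Longrightarrow> 0 \<le> \<mu> j"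
  shows "(\<Sum>j<n. \<mu> j * c j) \<le> (\<Sum>j<p. \<mu> j)"
proof -
  define m where "m = (if p < n then \<mu> p else 0)"
  have m0: "0 \<le> m" and m_low: "\<And>j. j < p \<Longrightarrow> m \<le> \<mu> j"
    and m_high: "\<And>j. p \<le> j \<Longrightarrow> j < n \<Longrightarrow> \<mu> j \<le> m"
    using pn \<mu>0 \<mu>_mono by (auto simp: m_def)
  have split: "(\<Sum>j<n. f j) = (\<Sum>j<p. f j) + (\<Sum>j\<in>{p..<n}. f j)" for f :: "nat \<Rightarrow> real"
    using pn by (metis atLeast0LessThan sum.atLeastLessThan_concat zero_le)
  have "(\<Sum>j\<in>{p..<n}. \<mu> j * c j) \<le> (\<Sum>j\<in>{p..<n}. m * c j)"
    using m_high c0 by (intro sum_mono mult_right_mono) auto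
  also have "\<dots> \<le> m * (real p - (\<Sum>j<p. c j))"
    using c_sum split[of c] m0 by (simp add: sum_distrib_left[symmetric] mult_left_mono)
  also have "\<dots> = (\<Sum>j<p. m * (1 - c j))"
    by (simp add: sum_distrib_left sum_subtractf algebra_simps)
  also have "\<dots> \<le> (\<Sum>j<p. (\<mu> j - \<mu> j * c j))"
  proof (intro sum_mono)
    fix j assume "j \<in> {..<p}"
    then have "0 \<le> (\<mu> j - m) * (1 - c j)"
      using m_low c1 pn by simp
    then show "m * (1 - c j) \<le> \<mu> j - \<mu> j * c j"
      by (simp add: algebra_simps)
  qed
  finally show ?thesis
    using split[of "\<lambda>j. \<mu> j * c j"] by (simp add: sum_subtractf)
qed

context
  fixes A :: "real^'n::finite^'n" and v :: "nat \<Rightarrow> real^'n" and \<mu> :: "nat \<Rightarrow> real"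
  assumes orthonormal: "orthonormal_on {..<CARD('n)} v"
    and eigen: "\<And>i. i < CARD('n) \<Longrightarrow> A *v v i = \<mu> i *\<^sub>R v i"
begin

lemma eigen_parseval: "(\<Sum>i<CARD('n). (inner x (v i))\<^sup>2) = (norm x)\<^sup>2"
  using parseval_identity[OF orthonormal, of x] orthonormal_on_span_UNIV[OF orthonormal] by simp

lemma eigen_quadratic_form: "inner x (A *v x) = (\<Sum>i<CARD('n). \<mu> i * (inner x (v i))\<^sup>2)"
proof -
  have "x = (\<Sum>i<CARD('n). inner x (v i) *\<^sub>R v i)"
    using orthonormal_on_expansion[OF orthonormal, of x] orthonormal_on_span_UNIV[OF orthonormal] by simp
  then have "A *v x = A *v (\<Sum>i<CARD('n). inner x (v i) *\<^sub>R v i)"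
    by (rule arg_cong)
  also have "\<dots> = (\<Sum>i<CARD('n). inner x (v i) *\<^sub>R (\<mu> i *\<^sub>R v i))"
    using eigen by (simp add: matrix_vector_mult_sum matrix_vector_mult_scaleR)
  finally show ?thesis
    by (simp add: inner_sum_right power2_eq_square mult_ac)
qed

lemma sum_quadratic_form_le_top_eigenvalues:
  fixes B :: "(real^'n) set"
  assumes B: "finite B" "orthonormal_on B (\<lambda>b. b)" and card: "card B \<le> p" and pn: "p \<le> CARD('n)"
    and \<mu>_mono: "\<And>i j. i \<le> j \<Longrightarrow> j < CARD('n) \<Longrightarrow> \<mu> j \<le> \<mu> i"
    and \<mu>0: "\<And>i. i < CARD('n) \<Longrightarrow> 0 \<le> \<mu> i"
  shows "(\<Sum>b\<in>B. inner b (A *v b)) \<le> (\<Sum>j<p. \<mu> j)"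
proof -
  define c where "c j = (\<Sum>b\<in>B. (inner b (v j))\<^sup>2)" for j
  have "(\<Sum>b\<in>B. inner b (A *v b)) = (\<Sum>j<CARD('n). \<mu> j * c j)"
    unfolding eigen_quadratic_form c_def by (simp add: sum_distrib_left sum.swap[of _ B])
  also have "\<dots> \<le> (\<Sum>j<p. \<mu> j)"
  proof (rule sum_weighted_le_sum_top[OF pn _ _ _ \<mu>_mono \<mu>0])
    show "0 \<le> c j" for j
      by (simp add: c_def sum_nonneg)
    show "c j \<le> 1" if "j < CARD('n)" for j
      using bessel_inequality[OF B(2,1), of "v j"] orthonormal that
      by (simp add: c_def inner_commute orthonormal_on_def power2_norm_eq_inner)
    have "(\<Sum>j<CARD('n). c j) = (\<Sum>b\<in>B. (norm b)\<^sup>2)"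
      unfolding c_def by (subst sum.swap) (simp add: eigen_parseval)
    also have "\<dots> = real (card B)"
      using B(2) by (simp add: orthonormal_on_def power2_norm_eq_inner)
    finally show "(\<Sum>j<CARD('n). c j) \<le> real p"
      using card by simp
  qed auto
  finally show ?thesis .
qed

end

lemma column_projU:
  "column c (projU p u ** (Y::real^'c::finite^'r::finite)) = (\<Sum>i<p. inner (column c Y) (u i) *\<^sub>R u i)"
proof -
  have "(\<Sum>k\<in>UNIV. (\<Sum>i<p. u i $ r * u i $ k) * Y $ k $ c) = (\<Sum>i<p. (\<Sum>k\<in>UNIV. Y $ k $ c * u i $ k) * u i $ r)" for r
    by (simp add: sum_distrib_left sum_distrib_right mult_ac sum.swap[of _ "{..<p}"])
  then show ?thesis
    by (simp add: column_def vec_eq_iff projU_def matrix_matrix_mult_def inner_vec_def)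
qed

lemma rank_projU_mult_le: "rank (projU p u ** (Y::real^'c::finite^'r::finite)) \<le> p"
proof -
  have "columns (projU p u ** Y) \<subseteq> span (u ` {..<p})"
    unfolding columns_def column_projU by (auto intro!: span_sum span_scale simp: span_base)
  then have "rank (projU p u ** Y) \<le> card (u ` {..<p})"
    unfolding column_rank_def by (simp add: dim_le_card)
  also have "\<dots> \<le> p"
    using card_image_le[of "{..<p}" u] by simp
  finally show ?thesis .
qed

lemma norm_projU_residual:
  fixes Y :: "real^'c::finite^'r::finite"
  assumes "orthonormal_on {..<p} u"
  shows "(norm (Y - projU p u ** Y))\<^sup>2 = (norm Y)\<^sup>2 - (\<Sum>i<p. inner (u i) ((Y ** transpose Y) *v u i))"
proof -
  have "(norm (Y - projU p u ** Y))\<^sup>2 =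
      (\<Sum>c\<in>UNIV. (norm (column c Y))\<^sup>2 - (\<Sum>i<p. (inner (column c Y) (u i))\<^sup>2))"
    unfolding power2_norm_columns[of "Y - projU p u ** Y"] column_diff
  proof (intro sum.cong refl)
    fix c
    show "(norm (column c Y - column c (projU p u ** Y)))\<^sup>2 =
        (norm (column c Y))\<^sup>2 - (\<Sum>i<p. (inner (column c Y) (u i))\<^sup>2)"
      using orthonormal_on_dist_sum[OF assms, of "column c Y" "\<lambda>i. inner (column c Y) (u i)"]
      by (simp add: column_projU)
  qed
  then show ?thesis
    by (simp add: sum_subtractf power2_norm_columns[of Y] sum.swap[of _ "{..<p}"]
        sum_inner_columns_square)
qed

lemma norm_residual_ge_quadratic_form:
  fixes Y C :: "real^'c::finite^'r::finite"
  assumes B: "finite B" "orthonormal_on B (\<lambda>b. b)" and C: "\<And>c. column c C \<in> span B"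
  shows "(norm Y)\<^sup>2 - (\<Sum>b\<in>B. inner b ((Y ** transpose Y) *v b)) \<le> (norm (Y - C))\<^sup>2"
proof -
  have "(norm Y)\<^sup>2 - (\<Sum>b\<in>B. inner b ((Y ** transpose Y) *v b)) =
      (\<Sum>c\<in>UNIV. (norm (column c Y))\<^sup>2 - (\<Sum>b\<in>B. (inner (column c Y) b)\<^sup>2))"
    by (simp add: sum_inner_columns_square[symmetric] sum_subtractf power2_norm_columns[of Y]
        sum.swap[of _ B])
  also have "\<dots> \<le> (\<Sum>c\<in>UNIV. (norm (column c Y - column c C))\<^sup>2)"
    using orthonormal_on_best_approx[OF B(2,1)] C by (intro sum_mono) simp
  also have "\<dots> = (norm (Y - C))\<^sup>2"
    by (simp add: power2_norm_columns[of "Y - C"] column_diff)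
  finally show ?thesis .
qed

lemma eckart_young:
  fixes Y C :: "real^'c::finite^'r::finite"
  assumes top: "top_eigvecs (Y ** transpose Y) p u" and p: "p \<le> CARD('r)" and C: "rank C \<le> p"
  shows "norm (Y - projU p u ** Y) \<le> norm (Y - C)"
proof -
  let ?A = "Y ** transpose Y"
  obtain v \<mu> where orth: "\<forall>i<CARD('r). \<forall>j<CARD('r). inner (v i) (v j) = (if i = j then 1 else 0)"
    and eigen: "\<forall>i<CARD('r). ?A *v v i = \<mu> i *\<^sub>R v i"
    and \<mu>_mono: "\<forall>i j. i \<le> j \<longrightarrow> j < CARD('r) \<longrightarrow> \<mu> j \<le> \<mu> i"
    and uv: "\<forall>i<p. u i = v i"
    using top unfolding top_eigvecs_def by blast
  have v: "orthonormal_on {..<CARD('r)} v" and u: "orthonormal_on {..<p} u"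
    using orth uv p unfolding orthonormal_on_def by auto
  have \<mu>: "inner (v i) (?A *v v i) = \<mu> i" if "i < CARD('r)" for i
    using eigen orth that by simp
  have \<mu>0: "0 \<le> \<mu> i" if "i < CARD('r)" for i
    using \<mu>[OF that] sum_inner_columns_square[of Y "v i"] by (metis sum_nonneg zero_le_power2)
  obtain B where B: "finite B" "orthonormal_on B (\<lambda>b. b)" "card B = rank C"
    and col: "\<And>c. column c C \<in> span B"
    using orthonormal_column_basis[of C] by blast
  have "(norm (Y - projU p u ** Y))\<^sup>2 = (norm Y)\<^sup>2 - (\<Sum>i<p. \<mu> i)"
    unfolding norm_projU_residual[OF u] using uv \<mu> p by simp
  also have "\<dots> \<le> (norm Y)\<^sup>2 - (\<Sum>b\<in>B. inner b (?A *v b))"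
    using sum_quadratic_form_le_top_eigenvalues[OF v _ B(1,2) _ p] eigen \<mu>_mono \<mu>0 B(3) C by auto
  also have "\<dots> \<le> (norm (Y - C))\<^sup>2"
    by (rule norm_residual_ge_quadratic_form[OF B(1,2) col])
  finally show ?thesis
    by (simp add: power2_le_iff_abs_le)
qed

section \<open>Global minimisers of the base loss\<close>

lemma projU_eq_mult_transpose:
  fixes u :: "nat \<Rightarrow> real^'r::finite" and h :: "nat \<Rightarrow> 'k::finite"
  assumes h: "inj_on h {..<p}"
  defines "U \<equiv> (\<chi> r k. \<Sum>i<p. if h i = k then u i $ r else 0) :: real^'k^'r"
  shows "projU p u = U ** transpose U"
proof -
  have U_h: "U $ c $ h i = u i $ c" if "i < p" for i c
  proof -
    have "U $ c $ h i = (\<Sum>j<p. if j = i then u j $ c else 0)"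
      unfolding U_def vec_lambda_beta
      by (intro sum.cong refl) (use h that in \<open>auto simp: inj_on_eq_iff\<close>)
    then show ?thesis
      using that by simp
  qed
  have "(U ** transpose U) $ r $ c = (\<Sum>i<p. u i $ r * u i $ c)" for r c
  proof -
    have U_r: "U $ r $ k * z = (\<Sum>i<p. if h i = k then u i $ r * z else 0)" for k z
      by (simp add: U_def sum_distrib_right if_distrib[of "\<lambda>a. a * z"] cong: if_cong)
    have "(U ** transpose U) $ r $ c = (\<Sum>k\<in>UNIV. U $ r $ k * U $ c $ k)"
      by (simp add: matrix_matrix_mult_def transpose_def)
    also have "\<dots> = (\<Sum>k\<in>UNIV. \<Sum>i<p. if h i = k then u i $ r * U $ c $ k else 0)"
      by (simp only: U_r)
    also have "\<dots> = (\<Sum>i<p. u i $ r * U $ c $ h i)"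
      by (subst sum.swap) simp
    finally show ?thesis
      by (simp add: U_h)
  qed
  then show ?thesis
    by (simp add: projU_def vec_eq_iff)
qed

lemma exists_factorization_projU:
  fixes u :: "nat \<Rightarrow> real^'r::finite" and Q :: "real^'c::finite^'r"
  assumes "p \<le> CARD('k::finite)"
  shows "\<exists>(F2::real^'k^'r) (F1::real^'c^'k). F2 ** F1 = projU p u ** Q"
proof -
  obtain h :: "nat \<Rightarrow> 'k" where h: "bij_betw h {..<CARD('k)} UNIV"
    using ex_bij_betw_nat_finite[of "UNIV::'k set"] by (auto simp: atLeast0LessThan)
  let ?U = "(\<chi> r k. \<Sum>i<p. if h i = k then u i $ r else 0) :: real^'k^'r"
  from h have "inj_on h {..<p}"
    using assms by (auto simp: bij_betw_def intro: inj_on_subset)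
  then have "projU p u = ?U ** transpose ?U"
    by (rule projU_eq_mult_transpose)
  then have "?U ** (transpose ?U ** Q) = projU p u ** Q"
    by (simp add: matrix_mul_assoc)
  then show ?thesis
    by blast
qed

lemma rank_mult_le_pdim:
  fixes A2 :: "real^'d1::finite^'dy::finite" and A1 :: "real^'dx::finite^'d1" and X :: "real^'N::finite^'dx"
  shows "rank (A2 ** A1 ** X) \<le> pdim TYPE('dx) TYPE('d1) TYPE('dy)"
  using rank_mul_le_left[of "A2 ** A1" X] rank_mul_le_left[of A2 A1] rank_mul_le_right[of A2 A1]
    rank_bound[of A2] rank_bound[of A1]
  unfolding pdim_def by linarith

lemma Lbase_minimizer_product:
  fixes Xe :: "real^'N::finite^'dx::finite" and Y :: "real^'N^'dy::finite"
    and A2 :: "real^'d1::finite^'dy" and A1 :: "real^'dx^'d1"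
  assumes inv: "invertible (transpose Xe ** Xe)"
    and uniq: "unique_best_rank_approx p Y"
    and p: "p = pdim TYPE('dx) TYPE('d1) TYPE('dy)"
    and top: "top_eigvecs (Y ** transpose Y) p u"
    and global_min: "\<forall>B :: (real^'d1^'dy) \<times> (real^'dx^'d1). Lbase Xe Y (A2, A1) \<le> Lbase Xe Y B"
  shows "A2 ** A1 ** Xe = projU p u ** Y"
proof -
  let ?B = "projU p u ** Y"
  have p_d1: "p \<le> CARD('d1)" and p_dy: "p \<le> CARD('dy)"
    using p by (auto simp: pdim_def)
  obtain F2 :: "real^'d1^'dy" and F1 :: "real^'dx^'d1"
    where F: "F2 ** F1 = projU p u ** (Y ** matrix_inv (transpose Xe ** Xe) ** transpose Xe)"
    using exists_factorization_projU[OF p_d1] by blast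
  have "F2 ** F1 ** Xe = ?B ** (matrix_inv (transpose Xe ** Xe) ** (transpose Xe ** Xe))"
    unfolding F by (simp add: matrix_mul_assoc)
  then have "F2 ** F1 ** Xe = ?B"
    by (simp add: matrix_inv_left[OF inv])
  then have "norm (Y - A2 ** A1 ** Xe) \<le> norm (Y - ?B)"
    using global_min[rule_format, of "(F2, F1)"]
    by (simp add: Lbase_def frob_eq_norm power2_le_iff_abs_le norm_minus_commute)
  then have "rank (A2 ** A1 ** Xe) \<le> p \<and> (\<forall>C. rank C \<le> p \<longrightarrow> frob (Y - A2 ** A1 ** Xe) \<le> frob (Y - C))"
    using rank_mult_le_pdim[of A2 A1 Xe] p eckart_young[OF top p_dy]
    by (auto simp: frob_eq_norm intro: order_trans)
  moreover have "rank ?B \<le> p \<and> (\<forall>C. rank C \<le> p \<longrightarrow> frob (Y - ?B) \<le> frob (Y - C))"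
    using rank_projU_mult_le eckart_young[OF top p_dy] by (simp add: frob_eq_norm)
  ultimately show ?thesis
    using uniq unfolding unique_best_rank_approx_def by blast
qed

section \<open>The limit of a balanced flow\<close>

lemma trace_square_le_rank_norm:
  fixes S :: "real^'n::finite^'n"
  shows "(\<Sum>c\<in>UNIV. S$c$c)\<^sup>2 \<le> real (rank S) * (norm S)\<^sup>2"
proof -
  obtain B where B: "finite B" "orthonormal_on B (\<lambda>b. b)" "card B = rank S"
    and col: "\<And>c. column c S \<in> span B"
    using orthonormal_column_basis[of S] by blast
  define f where "f b = (\<Sum>c\<in>UNIV. inner (column c S) b * b$c)" for b
  have "(\<Sum>c\<in>UNIV. S$c$c) = (\<Sum>c\<in>UNIV. (\<Sum>b\<in>B. inner (column c S) b *\<^sub>R b)$c)"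
    using orthonormal_on_expansion[OF B(2,1)] col by (intro sum.cong refl) (simp add: column_def)
  also have "\<dots> = (\<Sum>b\<in>B. f b)"
    unfolding f_def by (simp add: sum_component sum.swap[of _ B])
  finally have trace: "(\<Sum>c\<in>UNIV. S$c$c) = (\<Sum>b\<in>B. f b)" .
  have "(f b)\<^sup>2 \<le> (\<Sum>c\<in>UNIV. (inner (column c S) b)\<^sup>2)" if "b \<in> B" for b
  proof -
    have "(f b)\<^sup>2 \<le> (\<Sum>c\<in>UNIV. (inner (column c S) b)\<^sup>2) * (\<Sum>c\<in>UNIV. (b$c)\<^sup>2)"
      unfolding f_def by (rule Cauchy_Schwarz_ineq_sum)
    moreover have "(\<Sum>c\<in>UNIV. (b$c)\<^sup>2) = 1"
      using B(2) that by (simp add: orthonormal_on_def inner_vec_def power2_eq_square)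
    ultimately show ?thesis
      by simp
  qed
  then have "(\<Sum>b\<in>B. (f b)\<^sup>2) \<le> (\<Sum>c\<in>UNIV. \<Sum>b\<in>B. (inner (column c S) b)\<^sup>2)"
    by (subst sum.swap) (rule sum_mono)
  also have "\<dots> \<le> (\<Sum>c\<in>UNIV. (norm (column c S))\<^sup>2)"
    by (intro sum_mono bessel_inequality[OF B(2,1), simplified])
  finally have sum_f: "(\<Sum>b\<in>B. (f b)\<^sup>2) \<le> (norm S)\<^sup>2"
    by (simp add: power2_norm_columns)
  have "(\<Sum>b\<in>B. f b)\<^sup>2 \<le> (\<Sum>b\<in>B. (f b)\<^sup>2) * real (card B)"
    by (rule sum_squared_le_sum_of_squares)
  also have "\<dots> \<le> (norm S)\<^sup>2 * real (card B)"
    using sum_f by (rule mult_right_mono) simp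
  finally show ?thesis
    by (simp add: trace B(3) mult.commute)
qed

lemma balanced_norm_square_le:
  fixes A2 :: "real^'d1::finite^'dy::finite" and A1 :: "real^'dx::finite^'d1"
  assumes bal: "transpose A2 ** A2 = A1 ** transpose A1"
  shows "(norm A2)\<^sup>2 \<le> sqrt (real (pdim TYPE('dx) TYPE('d1) TYPE('dy))) * norm (A2 ** A1)"
proof -
  define S where "S = transpose A2 ** A2"
  have trace: "(norm A2)\<^sup>2 = (\<Sum>c\<in>UNIV. S$c$c)"
    unfolding S_def power2_norm_matrix
    by (simp add: matrix_matrix_mult_def transpose_def power2_eq_square) (rule sum.swap)
  have "inner (A2 ** A1) (A2 ** A1) = inner (A2 ** A1 ** transpose A1) A2"
    by (rule inner_matrix_mult_right)
  also have "\<dots> = inner A2 (A2 ** S)"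
    by (simp add: S_def bal inner_commute matrix_mul_assoc)
  also have "\<dots> = inner S S"
    by (simp add: inner_matrix_mult_left S_def)
  finally have norm_S: "norm (A2 ** A1) = norm S"
    by (simp add: norm_eq_sqrt_inner)
  have "rank S \<le> rank A2" "rank S \<le> rank A1"
    unfolding S_def by (rule rank_mul_le_right) (unfold bal, rule rank_mul_le_left)
  then have "rank S \<le> pdim TYPE('dx) TYPE('d1) TYPE('dy)"
    using rank_bound[of A2] rank_bound[of A1] unfolding pdim_def by linarith
  then have "real (rank S) * (norm S)\<^sup>2 \<le> real (pdim TYPE('dx) TYPE('d1) TYPE('dy)) * (norm S)\<^sup>2"
    by (intro mult_right_mono) simp_all
  then have "((norm A2)\<^sup>2)\<^sup>2 \<le> real (pdim TYPE('dx) TYPE('d1) TYPE('dy)) * (norm S)\<^sup>2"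
    using trace_square_le_rank_norm[of S] unfolding trace by linarith
  also have "\<dots> = (sqrt (real (pdim TYPE('dx) TYPE('d1) TYPE('dy))) * norm S)\<^sup>2"
    by (simp add: power_mult_distrib)
  finally show ?thesis
    unfolding norm_S by (rule power2_le_imp_le) simp
qed

lemma quadratic_root_bound:
  fixes a s \<delta> \<gamma> :: real
  assumes "0 \<le> a" "0 \<le> s" "0 \<le> \<delta>" "0 \<le> \<gamma>" and quad: "a\<^sup>2 \<le> s * (\<gamma> + \<delta> * a)"
  shows "a \<le> s * \<delta> + sqrt (s * \<gamma>)"
proof (rule ccontr)
  define r where "r = sqrt (s * \<gamma>)"
  have r: "0 \<le> r" "r * r = s * \<gamma>"
    using assms by (auto simp: r_def)
  assume "\<not> a \<le> s * \<delta> + sqrt (s * \<gamma>)"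
  then have "r < a - s * \<delta>" "0 \<le> s * \<delta>"
    using assms by (auto simp: r_def)
  then have "r * r < a * (a - s * \<delta>)"
    using r(1) by (intro mult_strict_mono) auto
  then show False
    using quad r(2) by (simp add: power2_eq_square algebra_simps)
qed

lemma balanced_perturbation_bound:
  fixes A2 :: "real^'d1::finite^'dy::finite" and A1 Z :: "real^'dx::finite^'d1"
  assumes bal: "transpose A2 ** A2 = A1 ** transpose A1"
    and decomp: "A2 ** A1 = W + A2 ** Z" and Z: "norm Z \<le> \<delta>"
  defines "p \<equiv> real (pdim TYPE('dx) TYPE('d1) TYPE('dy))"
  shows "norm (A2 ** Z) \<le> (sqrt p * \<delta> + p powr (1/4) * sqrt (norm W)) * \<delta>"
proof -
  have \<delta>: "0 \<le> \<delta>"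
    using Z norm_ge_zero order_trans by blast
  have A2Z: "norm (A2 ** Z) \<le> norm A2 * \<delta>"
    using norm_matrix_mult_le[of A2 Z] Z by (meson mult_left_mono norm_ge_zero order_trans)
  have "(norm A2)\<^sup>2 \<le> sqrt p * norm (A2 ** A1)"
    unfolding p_def by (rule balanced_norm_square_le[OF bal])
  also have "\<dots> \<le> sqrt p * (norm W + \<delta> * norm A2)"
    using decomp A2Z norm_triangle_ineq[of W "A2 ** Z"]
    by (intro mult_left_mono) (simp_all add: mult.commute p_def)
  finally have "norm A2 \<le> sqrt p * \<delta> + sqrt (sqrt p * norm W)"
    using \<delta> by (intro quadratic_root_bound) (simp_all add: p_def)
  also have "sqrt (sqrt p * norm W) = p powr (1/4) * sqrt (norm W)"
    by (simp add: real_sqrt_mult p_def powr_powr flip: powr_half_sqrt)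
  finally show ?thesis
    using A2Z \<delta> by (meson mult_right_mono order_trans)
qed

lemma norm_mult_complement_projection_le:
  fixes M :: "real^'n::finite^'m::finite" and P :: "real^'n^'n"
  assumes sym: "transpose P = P" and idem: "P ** P = P"
  shows "norm (M ** (mat 1 - P)) \<le> norm M"
proof -
  have "inner (M ** P) (M ** (mat 1 - P)) = inner (M ** P ** transpose (mat 1 - P)) M"
    by (rule inner_matrix_mult_right)
  also have "M ** P ** transpose (mat 1 - P) = 0"
    using sym idem by (simp add: transpose_diff matrix_diff_ldistrib flip: matrix_mul_assoc)
  finally have orth: "inner (M ** P) (M ** (mat 1 - P)) = 0"
    by simp
  have "M = M ** P + M ** (mat 1 - P)"
    by (simp add: matrix_diff_ldistrib)
  then have "(norm M)\<^sup>2 = (norm (M ** P))\<^sup>2 + (norm (M ** (mat 1 - P)))\<^sup>2"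
    using orth by (metis norm_add_Pythagorean orthogonal_def)
  then show ?thesis
    by (metis le_add_same_cancel2 power2_le_imp_le norm_ge_zero zero_le_power2)
qed

lemma column_space_projection:
  fixes X :: "real^'N::finite^'d::finite"
  assumes inv: "invertible (transpose X ** X)"
  defines "P \<equiv> X ** matrix_inv (transpose X ** X) ** transpose X"
  shows "transpose P = P" and "P ** P = P" and "transpose X ** (mat 1 - P) = 0"
proof -
  define G where "G = transpose X ** X"
  have G: "G ** matrix_inv G = mat 1" "matrix_inv G ** G = mat 1"
    using inv by (simp_all add: G_def matrix_inv_right matrix_inv_left)
  have "transpose (matrix_inv G) ** G = transpose (transpose G ** matrix_inv G)"
    by (simp add: matrix_transpose_mul)
  also have "\<dots> = mat 1"
    by (simp add: G_def matrix_transpose_mul G[unfolded G_def])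
  finally have "transpose (matrix_inv G) = matrix_inv G"
    by (metis G(1) matrix_mul_assoc matrix_mul_lid matrix_mul_rid)
  have P: "P = X ** matrix_inv G ** transpose X"
    by (simp add: P_def G_def)
  show "transpose P = P"
    using \<open>transpose (matrix_inv G) = matrix_inv G\<close> by (simp add: P matrix_transpose_mul matrix_mul_assoc)
  have "P ** P = X ** (matrix_inv G ** G ** matrix_inv G) ** transpose X"
    by (simp add: P G_def matrix_mul_assoc)
  then show "P ** P = P"
    by (simp add: G(2) P)
  have "transpose X ** P = (G ** matrix_inv G) ** transpose X"
    by (simp add: P G_def matrix_mul_assoc)
  then show "transpose X ** (mat 1 - P) = 0"
    by (simp add: matrix_diff_ldistrib G(1))
qed

lemma Lbase_gradient_flow_limit:
  fixes Xe :: "real^'N::finite^'dx::finite" and Y :: "real^'N^'dy::finite"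
    and W2 :: "real \<Rightarrow> real^'d1::finite^'dy" and W1 :: "real \<Rightarrow> real^'dx^'d1"
    and A2 :: "real^'d1^'dy" and A1 :: "real^'dx^'d1"
  assumes inv: "invertible (transpose Xe ** Xe)"
    and uniq: "unique_best_rank_approx p Y"
    and p: "p = pdim TYPE('dx) TYPE('d1) TYPE('dy)"
    and top: "top_eigvecs (Y ** transpose Y) p u"
    and flow: "is_gradient_flow (Lbase Xe Y) (\<lambda>t. (W2 t, W1 t))"
    and bal0: "transpose (W2 0) ** W2 0 = W1 0 ** transpose (W1 0)"
    and W1_0: "frob (W1 0) \<le> \<delta>"
    and lim: "((\<lambda>t. (W2 t, W1 t)) \<longlongrightarrow> (A2, A1)) at_top"
    and global_min: "\<forall>B :: (real^'d1^'dy) \<times> (real^'dx^'d1). Lbase Xe Y (A2, A1) \<le> Lbase Xe Y B"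
  defines "Wstar \<equiv> projU p u ** Y ** matrix_inv (transpose Xe ** Xe) ** transpose Xe"
  shows "\<exists>Wd. ((\<lambda>t. W2 t ** W1 t) \<longlongrightarrow> Wstar + Wd) at_top \<and>
           frob Wd \<le> (sqrt (real p) * \<delta> + real p powr (1/4) * sqrt (frob Wstar)) * \<delta>"
proof -
  define P where "P = Xe ** matrix_inv (transpose Xe ** Xe) ** transpose Xe"
  note proj = column_space_projection[OF inv, folded P_def]
  define Z where "Z = W1 0 ** (mat 1 - P)"
  note mult_tendsto = bounded_bilinear.tendsto[OF bounded_bilinear_matrix_mult]
  have W2_lim: "(W2 \<longlongrightarrow> A2) at_top" and W1_lim: "(W1 \<longlongrightarrow> A1) at_top"
    using tendsto_fst[OF lim] tendsto_snd[OF lim] by simp_all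
  have kernel: "A1 ** (mat 1 - P) = Z"
    unfolding Z_def
    by (rule conserved_limit[OF Lbase_flow_kernel_derivative[OF flow _ proj(3)]
          mult_tendsto[OF W1_lim tendsto_const]])
  have imbalance_lim: "((\<lambda>t. transpose (W2 t) ** W2 t - W1 t ** transpose (W1 t))
      \<longlongrightarrow> transpose A2 ** A2 - A1 ** transpose A1) at_top"
    by (intro tendsto_diff mult_tendsto bounded_linear.tendsto[OF bounded_linear_transpose] W1_lim W2_lim)
  have "transpose A2 ** A2 - A1 ** transpose A1 = transpose (W2 0) ** W2 0 - W1 0 ** transpose (W1 0)"
    by (rule conserved_limit[OF _ imbalance_lim]) (rule Lbase_flow_imbalance_derivative[OF flow])
  then have bal: "transpose A2 ** A2 = A1 ** transpose A1"
    using bal0 by simp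
  have "A2 ** A1 ** P = Wstar"
    using Lbase_minimizer_product[OF inv uniq p top global_min] by (simp add: P_def Wstar_def matrix_mul_assoc)
  then have decomp: "A2 ** A1 = Wstar + A2 ** Z"
    by (simp add: matrix_diff_ldistrib flip: kernel matrix_mul_assoc)
  have "norm Z \<le> \<delta>"
    using norm_mult_complement_projection_le[OF proj(1,2), of "W1 0"] W1_0 by (simp add: Z_def frob_eq_norm)
  then have "frob (A2 ** Z) \<le> (sqrt (real p) * \<delta> + real p powr (1/4) * sqrt (frob Wstar)) * \<delta>"
    using balanced_perturbation_bound[OF bal decomp] by (simp add: p frob_eq_norm)
  moreover have "((\<lambda>t. W2 t ** W1 t) \<longlongrightarrow> Wstar + A2 ** Z) at_top"
    using mult_tendsto[OF W2_lim W1_lim] by (simp add: decomp)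
  ultimately show ?thesis
    by blast
qed

section \<open>Almost sure invertibility of the Gram matrix\<close>

lemma colmat_mult: "colmat v *v a = (\<Sum>i\<in>UNIV. a$i *\<^sub>R v i)"
  by (simp add: colmat_def vec_eq_iff matrix_vector_mult_def sum_component mult.commute)

definition colmat_on :: "'N::finite set \<Rightarrow> ('N \<Rightarrow> real^'d::finite) \<Rightarrow> real^'N^'d" where
  "colmat_on S v = colmat (\<lambda>i. if i \<in> S then v i else 0)"

lemma colmat_on_mult: "colmat_on S v *v a = (\<Sum>i\<in>S. a$i *\<^sub>R v i)"
  by (simp add: colmat_on_def colmat_mult if_distrib[of "scaleR _"] sum.If_cases)

lemma colmat_on_eq_sum: "colmat_on S v = (\<Sum>c\<in>S. colmat_on {c} (\<lambda>_. v c))"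
  by (simp add: colmat_on_def colmat_def vec_eq_iff sum_component if_distrib[of "\<lambda>x. x $ _"] sum.If_cases)

lemma continuous_on_colmat_on_singleton:
  "continuous_on UNIV (\<lambda>w::real^'d::finite. colmat_on {c::'N::finite} (\<lambda>_. w))"
proof -
  have "linear (\<lambda>w::real^'d. colmat_on {c} (\<lambda>_. w))"
    by (rule linearI) (simp_all add: colmat_on_def colmat_def vec_eq_iff)
  then show ?thesis
    by (simp add: linear_continuous_on linear_conv_bounded_linear)
qed

definition independent_family :: "'N::finite set \<Rightarrow> ('N \<Rightarrow> real^'d::finite) \<Rightarrow> bool" where
  "independent_family S z \<longleftrightarrow> (\<forall>c::real^'N. (\<Sum>i\<in>S. c$i *\<^sub>R z i) = 0 \<longrightarrow> (\<forall>i\<in>S. c$i = 0))"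

lemma independent_family_insert:
  fixes z :: "'N::finite \<Rightarrow> real^'d::finite"
  assumes k: "k \<notin> S" and S: "independent_family S z" and zk: "\<nexists>a. colmat_on S z *v a = z k"
  shows "independent_family (insert k S) z"
  unfolding independent_family_def
proof (intro allI impI)
  fix c :: "real^'N" assume "(\<Sum>i\<in>insert k S. c$i *\<^sub>R z i) = 0"
  then have c: "c$k *\<^sub>R z k + (\<Sum>i\<in>S. c$i *\<^sub>R z i) = 0"
    using k by simp
  have ck: "c$k = 0"
  proof (rule ccontr)
    assume "c$k \<noteq> 0"
    have "colmat_on S z *v (\<chi> j. - c$j / c$k) = (\<Sum>j\<in>S. (- c$j / c$k) *\<^sub>R z j)"
      by (simp add: colmat_on_mult)
    also have "\<dots> = (- 1 / c$k) *\<^sub>R (\<Sum>j\<in>S. c$j *\<^sub>R z j)"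
      by (simp add: scaleR_sum_right)
    also have "(\<Sum>j\<in>S. c$j *\<^sub>R z j) = - (c$k *\<^sub>R z k)"
      using c by (simp add: eq_neg_iff_add_eq_0 add.commute)
    finally have "colmat_on S z *v (\<chi> j. - c$j / c$k) = z k"
      using \<open>c$k \<noteq> 0\<close> by simp
    with zk show False
      by blast
  qed
  then show "\<forall>i\<in>insert k S. c$i = 0"
    using S c unfolding independent_family_def by simp
qed

lemma independent_family_invertible_gram:
  fixes z :: "'N::finite \<Rightarrow> real^'d::finite"
  assumes "independent_family UNIV z"
  shows "invertible (transpose (colmat z) ** colmat z)"
proof -
  let ?X = "colmat z"
  have "inj ((*v) (transpose ?X ** ?X))"
  proof (rule injI)
    fix c d assume "(transpose ?X ** ?X) *v c = (transpose ?X ** ?X) *v d"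
    then have "(transpose ?X ** ?X) *v (c - d) = 0"
      by (simp add: matrix_vector_mult_diff_distrib)
    moreover have "inner (?X *v (c - d)) (?X *v (c - d)) = inner (c - d) ((transpose ?X ** ?X) *v (c - d))"
      by (simp add: inner_vec_def matrix_vector_mult_def matrix_matrix_mult_def transpose_def
          sum_distrib_left sum_distrib_right mult_ac sum.swap[of _ "UNIV::'d set"])
    ultimately have "(\<Sum>i\<in>UNIV. (c - d)$i *\<^sub>R z i) = 0"
      by (simp add: colmat_mult)
    then have "\<forall>i\<in>UNIV. (c - d)$i = 0"
      using assms unfolding independent_family_def by blast
    then show "c = d"
      by (simp add: vec_eq_iff)
  qed
  then obtain B where "B ** (transpose ?X ** ?X) = mat 1"
    using matrix_left_invertible_injective by blast
  then show ?thesis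
    using invertible_left_inverse by blast
qed

definition in_column_space :: "((real^'d::finite) \<times> (real^'N::finite^'d)) set" where
  "in_column_space = {(w, Z). \<exists>a. Z *v a = w}"

lemma in_column_space_borel:
  "(in_column_space :: ((real^'d::finite) \<times> (real^'N::finite^'d)) set) \<in> sets borel"
proof -
  let ?f = "\<lambda>p::(real^'N) \<times> (real^'N^'d). (snd p *v fst p, snd p)"
  have cont: "continuous_on UNIV ?f"
    by (intro continuous_intros bounded_bilinear.continuous_on[OF bounded_bilinear_matrix_vector_mult])
  have eq: "in_column_space = (\<Union>n::nat. ?f ` cball 0 (real n))"
  proof
    show "in_column_space \<subseteq> (\<Union>n::nat. ?f ` cball 0 (real n))"
    proof
      fix q assume "q \<in> (in_column_space :: ((real^'d) \<times> (real^'N^'d)) set)"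
      then obtain a Z where q: "q = (Z *v a, Z)"
        unfolding in_column_space_def by auto
      obtain n :: nat where "norm (a, Z) \<le> real n"
        using real_arch_simple by blast
      then show "q \<in> (\<Union>n::nat. ?f ` cball 0 (real n))"
        using q by (auto intro!: image_eqI[of _ _ "(a, Z)"])
    qed
    show "(\<Union>n::nat. ?f ` cball 0 (real n)) \<subseteq> in_column_space"
      unfolding in_column_space_def by auto
  qed
  have "?f ` cball 0 (real n) \<in> sets borel" for n :: nat
    by (intro borel_closed compact_imp_closed compact_continuous_image
        continuous_on_subset[OF cont] compact_cball) simp
  then show ?thesis
    unfolding eq by (intro sets.countable_UN) auto
qed

lemma negligible_in_column_space_section:
  fixes Z :: "real^'N::finite^'d::finite" and e :: "real^'d"
  assumes "CARD('N) < CARD('d)"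
  shows "negligible {a. (a + e, Z) \<in> in_column_space}"
proof -
  have "dim (range ((*v) Z)) < DIM(real^'d)"
    using rank_bound[of Z] assms by (simp add: rank_dim_range[symmetric])
  then have "negligible (range ((*v) Z))"
    by (rule negligible_lowdim)
  moreover have "{a. (a + e, Z) \<in> in_column_space} = (\<lambda>v. - e + v) ` range ((*v) Z)"
    unfolding in_column_space_def by (auto simp: image_iff algebra_simps) (metis add.commute diff_add_cancel)
  ultimately show ?thesis
    using negligible_translation[of _ "- e"] by simp
qed

lemma (in prob_space) AE_indep_pair_notin:
  fixes W X :: "'a \<Rightarrow> 'b::second_countable_topology"
  assumes ind: "indep_var borel W borel X" and T: "T \<in> sets borel"
    and sections: "\<And>w. AE \<omega> in M. (w, X \<omega>) \<notin> T"
  shows "AE \<omega> in M. (W \<omega>, X \<omega>) \<notin> T"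
proof -
  have W: "W \<in> borel_measurable M" and X: "X \<in> borel_measurable M"
    using indep_var_rv1[OF ind] indep_var_rv2[OF ind] .
  have distr_pair: "distr M borel W \<Otimes>\<^sub>M distr M borel X = distr M (borel \<Otimes>\<^sub>M borel) (\<lambda>\<omega>. (W \<omega>, X \<omega>))"
    using ind by (simp add: indep_var_distribution_eq)
  interpret DW: prob_space "distr M borel W"
    by (rule prob_space_distr[OF W])
  interpret DX: prob_space "distr M borel X"
    by (rule prob_space_distr[OF X])
  interpret pair_prob_space "distr M borel W" "distr M borel X" ..
  have sets: "sets (distr M borel W \<Otimes>\<^sub>M distr M borel X) = sets (borel :: ('b \<times> 'b) measure)"
    by (simp add: borel_prod[symmetric] cong: sets_pair_measure_cong)
  have T': "{p \<in> space (distr M borel W \<Otimes>\<^sub>M distr M borel X). p \<notin> T} \<in> sets (distr M borel W \<Otimes>\<^sub>M distr M borel X)"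
    using T unfolding sets by (simp add: space_pair_measure Compl_eq[symmetric] sets.compl_sets)
  have "AE a in distr M borel X. (w, a) \<notin> T" for w
  proof -
    have "(\<lambda>a::'b. (w, a)) \<in> borel_measurable borel"
      by (intro borel_measurable_continuous_onI continuous_intros)
    from measurable_sets[OF this T] have "- {a. (w, a) \<in> T} \<in> sets borel"
      by (simp add: vimage_def sets.compl_sets)
    then have "{a \<in> space borel. (w, a) \<notin> T} \<in> sets borel"
      by (simp add: Compl_eq)
    then show ?thesis
      using sections by (simp add: AE_distr_iff X)
  qed
  then have "AE p in distr M borel W \<Otimes>\<^sub>M distr M borel X. p \<notin> T"
    by (intro AE_pair_measure[OF T']) simp
  then have "AE p in distr M (borel \<Otimes>\<^sub>M borel) (\<lambda>\<omega>. (W \<omega>, X \<omega>)). p \<notin> T"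
    unfolding distr_pair .
  moreover have "{p \<in> space (borel \<Otimes>\<^sub>M borel). p \<notin> T} \<in> sets (borel \<Otimes>\<^sub>M borel)"
    unfolding borel_prod using T by (simp add: Compl_eq[symmetric] sets.compl_sets)
  ultimately show ?thesis
    by (simp add: AE_distr_iff measurable_Pair[OF W X])
qed

lemma AE_notin_negligible:
  fixes X :: "'a \<Rightarrow> 'b::euclidean_space"
  assumes X: "X \<in> borel_measurable M" and ac: "absolutely_continuous lborel (distr M lborel X)"
    and N: "negligible N" "N \<in> sets borel"
  shows "AE \<omega> in M. X \<omega> \<notin> N"
proof -
  have "N \<in> null_sets lborel"
    using N null_sets_completion_iff[of N lborel] by (simp add: negligible_iff_null_sets)
  then have "N \<in> null_sets (distr M lborel X)"
    using ac unfolding absolutely_continuous_def by blast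
  then have "AE a in distr M lborel X. a \<notin> N"
    by (rule AE_not_in)
  then show ?thesis
    using N(2) X by (simp add: AE_distr_iff)
qed

text \<open>\<open>indep_var\<close> compares random variables with values in one type, hence the padding
  of \<open>x\<^sub>k\<close> with a zero matrix.\<close>
lemma (in prob_space) indep_noise_and_other_columns:
  fixes x e :: "'N::finite \<Rightarrow> 'a \<Rightarrow> real^'d::finite" and y :: "'N \<Rightarrow> 'a \<Rightarrow> real^'dy::finite"
  assumes indep: "indep_vars (\<lambda>_. borel)
      (\<lambda>k \<omega>. case k of Inl i \<Rightarrow> (x i \<omega>, y i \<omega>) | Inr i \<Rightarrow> (e i \<omega>, 0)) UNIV"
    and k: "k \<notin> S"
  shows "indep_var borel (\<lambda>\<omega>. (e k \<omega>, colmat_on S (\<lambda>i. x i \<omega> + e i \<omega>)))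
                   borel (\<lambda>\<omega>. (x k \<omega>, 0))"
proof -
  define R where "R = (\<lambda>k \<omega>. case k of Inl i \<Rightarrow> (x i \<omega>, y i \<omega>) | Inr i \<Rightarrow> (e i \<omega>, 0::real^'dy))"
  define L where "L = Inr ` insert k S \<union> Inl ` S"
  define K where "K = {Inl k :: 'N + 'N}"
  define h1 :: "('N + 'N \<Rightarrow> (real^'d) \<times> (real^'dy)) \<Rightarrow> (real^'d) \<times> (real^'N^'d)" where
    "h1 F = (fst (F (Inr k)), \<Sum>c\<in>S. colmat_on {c} (\<lambda>_. fst (F (Inl c)) + fst (F (Inr c))))" for F
  define h2 :: "('N + 'N \<Rightarrow> (real^'d) \<times> (real^'dy)) \<Rightarrow> (real^'d) \<times> (real^'N^'d)" where
    "h2 F = (fst (F (Inl k)), 0)" for F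
  have fst_borel: "(fst :: (real^'d) \<times> (real^'dy) \<Rightarrow> real^'d) \<in> borel_measurable borel"
    by (intro borel_measurable_continuous_onI continuous_intros)
  have component: "(\<lambda>F::'N + 'N \<Rightarrow> (real^'d) \<times> (real^'dy). fst (F l)) \<in> borel_measurable (PiM I (\<lambda>_. borel))"
    if "l \<in> I" for l I
    by (rule measurable_compose[OF measurable_component_singleton[OF that] fst_borel])
  have colmat_borel: "(\<lambda>w. colmat_on {c} (\<lambda>_. w)) \<in> borel_measurable borel" for c :: 'N
    by (rule borel_measurable_continuous_onI[OF continuous_on_colmat_on_singleton])
  have "(\<lambda>F::'N + 'N \<Rightarrow> (real^'d) \<times> (real^'dy). \<Sum>c\<in>S. colmat_on {c} (\<lambda>_. fst (F (Inl c)) + fst (F (Inr c))))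
      \<in> borel_measurable (PiM L (\<lambda>_. borel))"
  proof (rule borel_measurable_sum)
    fix c assume "c \<in> S"
    then have "(\<lambda>F::'N + 'N \<Rightarrow> (real^'d) \<times> (real^'dy). fst (F (Inl c)) + fst (F (Inr c))) \<in> borel_measurable (PiM L (\<lambda>_. borel))"
      by (intro borel_measurable_add component) (auto simp: L_def)
    then show "(\<lambda>F::'N + 'N \<Rightarrow> (real^'d) \<times> (real^'dy). colmat_on {c} (\<lambda>_. fst (F (Inl c)) + fst (F (Inr c)))) \<in> borel_measurable (PiM L (\<lambda>_. borel))"
      by (rule measurable_compose[OF _ colmat_borel])
  qed
  then have h1: "h1 \<in> borel_measurable (PiM L (\<lambda>_. borel))"
    unfolding h1_def borel_prod[symmetric] by (intro measurable_Pair component) (simp_all add: L_def)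
  have h2: "h2 \<in> borel_measurable (PiM K (\<lambda>_. borel))"
    unfolding h2_def borel_prod[symmetric] by (intro measurable_Pair component measurable_const) (simp_all add: K_def)
  have "indep_var (PiM L (\<lambda>_. borel)) (\<lambda>\<omega>. restrict (\<lambda>l. R l \<omega>) L)
      (PiM K (\<lambda>_. borel)) (\<lambda>\<omega>. restrict (\<lambda>l. R l \<omega>) K)"
    using k by (intro indep_var_restrict[OF indep[folded R_def]]) (auto simp: L_def K_def)
  then have "indep_var borel (h1 \<circ> (\<lambda>\<omega>. restrict (\<lambda>l. R l \<omega>) L)) borel (h2 \<circ> (\<lambda>\<omega>. restrict (\<lambda>l. R l \<omega>) K))"
    by (rule indep_var_compose[OF _ h1 h2])
  moreover have "h1 \<circ> (\<lambda>\<omega>. restrict (\<lambda>l. R l \<omega>) L) = (\<lambda>\<omega>. (e k \<omega>, colmat_on S (\<lambda>i. x i \<omega> + e i \<omega>)))"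
    by (simp add: fun_eq_iff h1_def L_def R_def colmat_on_eq_sum[of S])
  moreover have "h2 \<circ> (\<lambda>\<omega>. restrict (\<lambda>l. R l \<omega>) K) = (\<lambda>\<omega>. (x k \<omega>, 0))"
    by (simp add: fun_eq_iff h2_def K_def R_def)
  ultimately show ?thesis
    by simp
qed

lemma noisy_column_not_in_span:
  fixes M :: "'w measure"
    and x :: "'N::finite \<Rightarrow> 'w \<Rightarrow> real^'dx::finite"
    and y :: "'N \<Rightarrow> 'w \<Rightarrow> real^'dy::finite"
    and e :: "'N \<Rightarrow> 'w \<Rightarrow> real^'dx"
  assumes P: "prob_space M" and card: "CARD('N) < CARD('dx)"
    and indep: "prob_space.indep_vars M (\<lambda>_. borel)
           (\<lambda>k \<omega>. case k of Inl i \<Rightarrow> (x i \<omega>, y i \<omega>) | Inr i \<Rightarrow> (e i \<omega>, 0)) UNIV"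
    and x_k: "x k \<in> borel_measurable M" and ac: "absolutely_continuous lborel (distr M lborel (x k))"
    and k: "k \<notin> S"
  shows "AE \<omega> in M. \<nexists>a. colmat_on S (\<lambda>i. x i \<omega> + e i \<omega>) *v a = x k \<omega> + e k \<omega>"
proof -
  interpret prob_space M
    by (rule P)
  define T :: "(((real^'dx) \<times> (real^'N^'dx)) \<times> ((real^'dx) \<times> (real^'N^'dx))) set"
    where "T = {(p, q). (fst q + fst p, snd p) \<in> in_column_space}"
  have "(\<lambda>(p, q). (fst q + fst p, snd p)) \<in> borel_measurable (borel :: (((real^'dx) \<times> (real^'N^'dx)) \<times> ((real^'dx) \<times> (real^'N^'dx))) measure)"
    by (intro borel_measurable_continuous_onI) (simp add: case_prod_beta' continuous_intros)
  from measurable_sets[OF this in_column_space_borel] have T: "T \<in> sets borel"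
    by (simp add: T_def vimage_def case_prod_beta')
  have "AE \<omega> in M. (w, (x k \<omega>, 0)) \<notin> T" for w
  proof -
    have "(\<lambda>a. (a + fst w, snd w)) \<in> borel_measurable borel"
      by (intro borel_measurable_continuous_onI continuous_intros)
    from measurable_sets[OF this in_column_space_borel]
    have "{a. (a + fst w, snd w) \<in> in_column_space} \<in> sets borel"
      by (simp add: vimage_def)
    with negligible_in_column_space_section[OF card]
    have "AE \<omega> in M. x k \<omega> \<notin> {a. (a + fst w, snd w) \<in> in_column_space}"
      by (intro AE_notin_negligible[OF x_k ac])
    then show ?thesis
      by (simp add: T_def)
  qed
  with indep_noise_and_other_columns[OF indep k] T
  have "AE \<omega> in M. ((e k \<omega>, colmat_on S (\<lambda>i. x i \<omega> + e i \<omega>)), (x k \<omega>, 0)) \<notin> T"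
    by (rule AE_indep_pair_notin)
  then show ?thesis
    by (simp add: T_def in_column_space_def add.commute)
qed

lemma AE_invertible_gram:
  fixes M :: "'w measure"
    and x :: "'N::finite \<Rightarrow> 'w \<Rightarrow> real^'dx::finite"
    and y :: "'N \<Rightarrow> 'w \<Rightarrow> real^'dy::finite"
    and e :: "'N \<Rightarrow> 'w \<Rightarrow> real^'dx"
  assumes P: "prob_space M" and card: "CARD('N) < CARD('dx)"
    and x: "\<And>i. x i \<in> borel_measurable M"
    and indep: "prob_space.indep_vars M (\<lambda>_. borel)
           (\<lambda>k \<omega>. case k of Inl i \<Rightarrow> (x i \<omega>, y i \<omega>) | Inr i \<Rightarrow> (e i \<omega>, 0)) UNIV"
    and ac: "\<And>i. absolutely_continuous lborel (distr M lborel (x i))"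
  shows "AE \<omega> in M. invertible (transpose (colmat (\<lambda>i. x i \<omega> + e i \<omega>)) ** colmat (\<lambda>i. x i \<omega> + e i \<omega>))"
proof -
  have "AE \<omega> in M. independent_family S (\<lambda>i. x i \<omega> + e i \<omega>)" for S :: "'N set"
    using finite[of S]
  proof (induction S rule: finite_induct)
    case empty
    show ?case
      by (simp add: independent_family_def)
  next
    case (insert k S)
    from noisy_column_not_in_span[OF P card indep x ac insert(2)] insert.IH show ?case
      by eventually_elim (rule independent_family_insert[OF insert(2)])
  qed
  from this[of UNIV] show ?thesis
    by (rule AE_mp) (simp add: independent_family_invertible_gram)
qed

theorem mainTheorem2:
  fixes M :: "'w measure"
    and x :: "'N::finite \<Rightarrow> 'w \<Rightarrow> real^'dx::finite"
    and y :: "'N \<Rightarrow> 'w \<Rightarrow> real^'dy::finite"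
    and e :: "'N \<Rightarrow> 'w \<Rightarrow> real^'dx"
  assumes "prob_space M"
    and "CARD('N) < CARD('dx)"
    and "\<And>i. x i \<in> borel_measurable M"
    and "\<And>i. y i \<in> borel_measurable M"
    and "\<And>i. e i \<in> borel_measurable M"
    and "prob_space.indep_vars M (\<lambda>_. borel)
           (\<lambda>k \<omega>. case k of Inl i \<Rightarrow> (x i \<omega>, y i \<omega>) | Inr i \<Rightarrow> (e i \<omega>, 0)) UNIV"
    and "\<And>i. absolutely_continuous lborel (distr M lborel (x i))"
    and "\<And>i. absolutely_continuous lborel (distr M lborel (e i))"
  shows "AE \<omega> in M.
    (let Xe = colmat (\<lambda>i. x i \<omega> + e i \<omega>); Y = colmat (\<lambda>i. y i \<omega>);
         p = pdim TYPE('dx) TYPE('d1::finite) TYPE('dy) in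
     unique_best_rank_approx p Y \<longrightarrow>
     (\<forall>u \<delta> (W2 :: real \<Rightarrow> real^'d1^'dy) (W1 :: real \<Rightarrow> real^'dx^'d1) A2 A1.
        top_eigvecs (Y ** transpose Y) p u \<and>
        \<delta> > 0 \<and>
        is_gradient_flow (Lbase Xe Y) (\<lambda>t. (W2 t, W1 t)) \<and>
        transpose (W2 0) ** W2 0 = W1 0 ** transpose (W1 0) \<and>
        frob (W1 0) \<le> \<delta> \<and> frob (W2 0) \<le> \<delta> \<and>
        ((\<lambda>t. (W2 t, W1 t)) \<longlongrightarrow> (A2, A1)) at_top \<and>
        (\<forall>B :: (real^'d1^'dy) \<times> (real^'dx^'d1). Lbase Xe Y (A2, A1) \<le> Lbase Xe Y B)
        \<longrightarrow>
        (let Wstar = projU p u ** Y ** matrix_inv (transpose Xe ** Xe) ** transpose Xe;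
             \<gamma> = frob Wstar in
         \<exists>Wd. ((\<lambda>t. W2 t ** W1 t) \<longlongrightarrow> Wstar + Wd) at_top \<and>
              frob Wd \<le> (sqrt (real p) * \<delta> + real p powr (1/4) * sqrt \<gamma>) * \<delta>)))"
proof -
  \<comment> \<open>Only the clean inputs need a density.\<close>
  have "AE \<omega> in M. invertible (transpose (colmat (\<lambda>i. x i \<omega> + e i \<omega>)) ** colmat (\<lambda>i. x i \<omega> + e i \<omega>))"
    by (rule AE_invertible_gram[OF assms(1-3,6,7)])
  then show ?thesis
    by (rule AE_mp) (auto simp: Let_def intro!: AE_I2 Lbase_gradient_flow_limit[OF _ _ refl])
qed

end
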